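(* Fix $s>0$ and let $\Phi_s(x)=(1+e^{-sx})^{-1}$ and $\phi_s(x)=\Phi_s'(x)=se^{-sx}/(1+e^{-sx})^2$. Let $f:\mathbb{R}^3\to\mathbb{R}$ be a signed distance function whose zero-level set is a smooth surface $\mathbb{S}$, and let $\mathbf{p}(t)=\mathbf{o}+t\mathbf{v}$, $t\ge0$, be a ray with unit direction $\mathbf{v}$. Define $\sigma(t)=\phi_s(f(\mathbf{p}(t)))$, $T(t)=\exp\left(-\int_0^t\sigma(u)\,\mathrm{d}u\right)$ and $w(t)=T(t)\sigma(t)$. Let $t^*>0$ satisfy $f(\mathbf{p}(t^* ))=0$, and suppose that near $t^*$ the surface is tangentially approximated by a planar patch, i.e. $\nabla f(\mathbf{p}(t))$ is constant for $t$ in a neighborhood of $t^*$. Then $\frac{\mathrm{d}w}{\mathrm{d}t}(t^* )=-T(t^* )\phi_s(0)^2<0$; in particular $w$ does not attain a local maximum at $t^*$. *)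

theory Defs
  imports "HOL-Analysis.Analysis"
begin

definition Phi_s :: "real \<Rightarrow> real \<Rightarrow> real" where
  "Phi_s s x = 1 / (1 + exp (- s * x))"

definition phi_s :: "real \<Rightarrow> real \<Rightarrow> real" where
  "phi_s s x = s * exp (- s * x) / (1 + exp (- s * x))^2"

definition is_sdf :: "(real^3 \<Rightarrow> real) \<Rightarrow> bool" where
  "is_sdf f \<longleftrightarrow> (\<exists>\<Omega>::(real^3) set. \<forall>x.
      f x = (if x \<in> \<Omega> then - infdist x (frontier \<Omega>) else infdist x (frontier \<Omega>)))"

definition ray :: "real^3 \<Rightarrow> real^3 \<Rightarrow> real \<Rightarrow> real^3" where
  "ray x0 v t = x0 + t *\<^sub>R v"

definition sigma :: "real \<Rightarrow> (real^3 \<Rightarrow> real) \<Rightarrow> real^3 \<Rightarrow> real^3 \<Rightarrow> real \<Rightarrow> real" where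
  "sigma s f x0 v t = phi_s s (f (ray x0 v t))"

definition transm :: "real \<Rightarrow> (real^3 \<Rightarrow> real) \<Rightarrow> real^3 \<Rightarrow> real^3 \<Rightarrow> real \<Rightarrow> real" where
  "transm s f x0 v t = exp (- integral {0..t} (sigma s f x0 v))"

definition weight :: "real \<Rightarrow> (real^3 \<Rightarrow> real) \<Rightarrow> real^3 \<Rightarrow> real^3 \<Rightarrow> real \<Rightarrow> real" where
  "weight s f x0 v t = transm s f x0 v t * sigma s f x0 v t"

end

theory Submission
  imports Defs
begin

text \<open>The transmittance solves \<open>T' = - \<sigma> T\<close>, so \<open>w' = T (\<sigma>' - \<sigma>\<^sup>2)\<close>. The density \<open>\<phi>\<^sub>s\<close> is
  even, hence \<open>\<phi>\<^sub>s'(0) = 0\<close>, and by the chain rule \<open>\<sigma>'(t\<^sup>*) = 0\<close> wherever the ray crosses the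
  surface. Thus \<open>w'(t\<^sup>*) = - T(t\<^sup>*) \<phi>\<^sub>s(0)\<^sup>2 < 0\<close>, and a point of nonzero derivative is no local
  maximum.\<close>

lemma isCont_signed_infdist_frontier:
  fixes \<Omega> :: "'a::metric_space set"
  shows "isCont (\<lambda>y. if y \<in> \<Omega> then - infdist y (frontier \<Omega>) else infdist y (frontier \<Omega>)) x"
    (is "isCont ?f x")
proof -
  let ?d = "\<lambda>y. infdist y (frontier \<Omega>)"
  have cont_d: "isCont ?d y" for y by (intro continuous_intros)
  consider "x \<in> interior \<Omega>" | "x \<in> interior (- \<Omega>)" | "x \<in> frontier \<Omega>"
    by (metis ComplI DiffI closure_interior frontier_def)
  then show ?thesis
  proof cases
    case 1
    then have "eventually (\<lambda>y. y \<in> interior \<Omega>) (nhds x)"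
      by (intro eventually_nhds_in_open) auto
    then have "eventually (\<lambda>y. ?f y = - ?d y) (nhds x)"
      by eventually_elim (use interior_subset in auto)
    moreover have "isCont (\<lambda>y. - ?d y) x" using cont_d by (intro continuous_intros)
    ultimately show ?thesis using isCont_cong[of ?f "\<lambda>y. - ?d y" x] by blast
  next
    case 2
    then have "eventually (\<lambda>y. y \<in> interior (- \<Omega>)) (nhds x)"
      by (intro eventually_nhds_in_open) auto
    then have "eventually (\<lambda>y. ?f y = ?d y) (nhds x)"
      by eventually_elim (use interior_subset in auto)
    then show ?thesis using isCont_cong[of ?f ?d x] cont_d by blast
  next
    case 3
    have "\<bar>?f y\<bar> = ?d y" for y by (simp add: infdist_nonneg)
    moreover have "?d x = 0" using 3 by simp
    ultimately have "((\<lambda>y. \<bar>?f y\<bar>) \<longlongrightarrow> 0) (at x)"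
      using cont_d[of x] by (simp add: isCont_def)
    then show ?thesis using 3 by (simp add: isCont_def tendsto_rabs_zero_iff)
  qed
qed

lemma is_sdf_isCont:
  assumes "is_sdf f"
  shows "isCont f x"
proof -
  obtain \<Omega> where "f = (\<lambda>y. if y \<in> \<Omega> then - infdist y (frontier \<Omega>) else infdist y (frontier \<Omega>))"
    using assms unfolding is_sdf_def by blast
  then show ?thesis using isCont_signed_infdist_frontier by simp
qed

lemma isCont_phi_s: "isCont (phi_s s) x"
proof -
  have "1 + exp (- s * x) \<noteq> 0" by (smt (verit) exp_gt_zero)
  then show ?thesis unfolding phi_s_def[abs_def] by (intro continuous_intros) auto
qed

lemma phi_s_pos:
  assumes "s > 0"
  shows "phi_s s x > 0"
proof -
  have "1 + exp (- s * x) > 0" by (smt (verit) exp_gt_zero)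
  then show ?thesis using assms by (simp add: phi_s_def)
qed

lemma phi_s_has_real_derivative_0: "(phi_s s has_real_derivative 0) (at 0)"
proof -
  have "((\<lambda>x. s * exp (- s * x) / (1 + exp (- s * x))^2) has_real_derivative
     (s * (exp (- s * 0) * (- s)) * (1 + exp (- s * 0))^2
       - s * exp (- s * 0) * (2 * (1 + exp (- s * 0)) * (exp (- s * 0) * (- s))))
     / ((1 + exp (- s * 0))^2)^2) (at 0)"
    by (auto intro!: derivative_eq_intros simp: add_pos_pos)
  then show ?thesis unfolding phi_s_def[abs_def] by (simp add: algebra_simps)
qed

lemma is_sdf_isCont_sigma:
  assumes "is_sdf f"
  shows "isCont (sigma s f x0 v) t"
proof -
  have "isCont (ray x0 v) t" unfolding ray_def[abs_def] by (intro continuous_intros)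
  then show ?thesis
    unfolding sigma_def[abs_def]
    using continuous_at_compose[OF continuous_at_compose[OF _ is_sdf_isCont[OF assms]] isCont_phi_s]
    by (simp add: o_def)
qed

lemma transm_pos: "transm s f x0 v t > 0"
  by (simp add: transm_def)

lemma transm_has_real_derivative:
  assumes "is_sdf f" and "t > 0"
  shows "(transm s f x0 v has_real_derivative - transm s f x0 v t * sigma s f x0 v t) (at t)"
proof -
  have "continuous_on {0..t+1} (sigma s f x0 v)"
    using is_sdf_isCont_sigma[OF assms(1)] by (simp add: continuous_at_imp_continuous_on)
  moreover have "t \<in> interior {0..t+1}" using assms(2) by simp
  ultimately have "((\<lambda>u. integral {0..u} (sigma s f x0 v)) has_real_derivative sigma s f x0 v t) (at t)"
    using integral_has_real_derivative[of 0 "t+1" _ t] at_within_interior assms(2) by fastforce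
  then show ?thesis
    unfolding transm_def[abs_def] by (auto intro!: derivative_eq_intros)
qed

lemma gderiv_along_ray:
  assumes "GDERIV f (ray x0 v t) :> g"
  shows "((\<lambda>u. f (ray x0 v u)) has_real_derivative g \<bullet> v) (at t)"
proof -
  have "(ray x0 v has_derivative (\<lambda>h. h *\<^sub>R v)) (at t)"
    unfolding ray_def[abs_def] by (auto intro!: derivative_eq_intros)
  moreover have "(f has_derivative (\<lambda>h. h \<bullet> g)) (at (ray x0 v t))"
    using assms by (simp add: gderiv_def)
  ultimately have "((\<lambda>u. f (ray x0 v u)) has_derivative (\<lambda>h. h * (g \<bullet> v))) (at t)"
    using has_derivative_compose by (fastforce simp: o_def inner_commute)
  moreover have "(\<lambda>h. h * (g \<bullet> v)) = (*) (g \<bullet> v)" by auto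
  ultimately show ?thesis
    by (simp add: has_field_derivative_def)
qed

lemma sigma_has_real_derivative_0_at_surface:
  assumes "f (ray x0 v t) = 0" and "GDERIV f (ray x0 v t) :> g"
  shows "(sigma s f x0 v has_real_derivative 0) (at t)"
  using DERIV_chain2[OF _ gderiv_along_ray[OF assms(2)], of "phi_s s" 0]
    phi_s_has_real_derivative_0 assms(1)
  unfolding sigma_def[abs_def] by simp

lemma weight_has_real_derivative:
  assumes "is_sdf f" and "t > 0"
    and "(sigma s f x0 v has_real_derivative D) (at t)"
  shows "(weight s f x0 v has_real_derivative
           transm s f x0 v t * (D - (sigma s f x0 v t)\<^sup>2)) (at t)"
proof -
  have "(weight s f x0 v has_real_derivative transm s f x0 v t * D
          + (- transm s f x0 v t * sigma s f x0 v t) * sigma s f x0 v t) (at t)"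
    unfolding weight_def[abs_def]
    by (rule DERIV_mult'[OF transm_has_real_derivative[OF assms(1,2)] assms(3)])
  then show ?thesis by (simp add: power2_eq_square algebra_simps)
qed

theorem mainTheorem2:
  fixes s :: real and f :: "real^3 \<Rightarrow> real" and x0 v :: "real^3" and tstar :: real
  assumes "s > 0"
    and "is_sdf f"
    and "norm v = 1"
    and "tstar > 0"
    and "f (ray x0 v tstar) = 0"
    and "\<exists>\<epsilon>>0. \<exists>g. \<forall>t. \<bar>t - tstar\<bar> < \<epsilon> \<longrightarrow> (GDERIV f (ray x0 v t) :> g)"
  shows "(weight s f x0 v has_real_derivative (- transm s f x0 v tstar * (phi_s s 0)^2)) (at tstar)
    \<and> - transm s f x0 v tstar * (phi_s s 0)^2 < 0
    \<and> \<not> (\<exists>\<epsilon>>0. \<forall>t. \<bar>t - tstar\<bar> < \<epsilon> \<longrightarrow> weight s f x0 v t \<le> weight s f x0 v tstar)"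
proof -
  from assms(6) obtain g where "GDERIV f (ray x0 v tstar) :> g" by force
  then have "(sigma s f x0 v has_real_derivative 0) (at tstar)"
    using sigma_has_real_derivative_0_at_surface assms(5) by blast
  from weight_has_real_derivative[OF assms(2,4) this]
  have deriv: "(weight s f x0 v has_real_derivative - transm s f x0 v tstar * (phi_s s 0)^2) (at tstar)"
    using assms(5) by (simp add: sigma_def)
  have neg: "- transm s f x0 v tstar * (phi_s s 0)^2 < 0"
    using transm_pos phi_s_pos[OF assms(1)] by (simp add: power2_eq_square)
  show ?thesis
  proof (intro conjI deriv neg notI)
    assume "\<exists>\<epsilon>>0. \<forall>t. \<bar>t - tstar\<bar> < \<epsilon> \<longrightarrow> weight s f x0 v t \<le> weight s f x0 v tstar"
    then obtain d where "d > 0" "\<forall>t. \<bar>tstar - t\<bar> < d \<longrightarrow> weight s f x0 v t \<le> weight s f x0 v tstar"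
      by (metis abs_minus_commute)
    from DERIV_local_max[OF deriv this] neg show False by linarith
  qed
qed

end
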